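(* Let $\{\mathbf{A}_l\}_{1\le l\le N}$ be $n\times n$ complex matrices and $\{\mathbf{B}_l\}_{1\le l\le N}$, $\{\mathbf{C}_l\}_{1\le l\le N}$ be $n\times n$ matrices with nonnegative entries such that $|[\mathbf{A}_l]_{i,j}|\le\sqrt{[\mathbf{B}_l]_{i,j}[\mathbf{C}_l]_{i,j}}$ for all $l,i,j$. Let $\mathbf{A}=\prod_{l=1}^N\mathbf{A}_l$, $\mathbf{B}=\prod_{l=1}^N\mathbf{B}_l$, $\mathbf{C}=\prod_{l=1}^N\mathbf{C}_l$. Then $|[\mathbf{A}]_{i,j}|\le\sqrt{[\mathbf{B}]_{i,j}[\mathbf{C}]_{i,j}}$ for all $i,j$ and $\rho(\mathbf{A})\le\sqrt{\rho(\mathbf{B})\rho(\mathbf{C})}$. Moreover, if $\max(\rho(\mathbf{B}),\rho(\mathbf{C}))<1$, then $$\|(\mathbf{I}_n-\mathbf{A})^{-1}\|_\infty\le\sqrt{\|(\mathbf{I}_n-\mathbf{B})^{-1}\|_\infty\|(\mathbf{I}_n-\mathbf{C})^{-1}\|_\infty},\quad \|(\mathbf{I}_n-\mathbf{A})^{-1}\|_1\le\sqrt{\|(\mathbf{I}_n-\mathbf{B})^{-1}\|_1\|(\mathbf{I}_n-\mathbf{C})^{-1}\|_1}.$$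
   Context: $\rho(\cdot)$ is the spectral radius; $\|\mathbf{M}\|_\infty=\max_i\sum_j|[\mathbf{M}]_{i,j}|$ (max row sum) and $\|\mathbf{M}\|_1=\max_j\sum_i|[\mathbf{M}]_{i,j}|$ (max column sum). *)

theory Defs
  imports "Jordan_Normal_Form.Spectral_Radius" "Jordan_Normal_Form.Gauss_Jordan_Elimination"
begin

definition mat_list_prod :: "nat \<Rightarrow> 'a::semiring_1 mat list \<Rightarrow> 'a mat" where
  "mat_list_prod n Ms = foldr (\<lambda>M P. M * P) Ms (1\<^sub>m n)"

text \<open>Maximum row sum norm (insert 0 only matters for the empty 0 x 0 matrix).\<close>
definition norm_inf_mat :: "'a::real_normed_field mat \<Rightarrow> real" where
  "norm_inf_mat M = Max (insert 0 ((\<lambda>i. \<Sum>j<dim_col M. norm (M $$ (i, j))) ` {..<dim_row M}))"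

definition norm_one_mat :: "'a::real_normed_field mat \<Rightarrow> real" where
  "norm_one_mat M = Max (insert 0 ((\<lambda>j. \<Sum>i<dim_row M. norm (M $$ (i, j))) ` {..<dim_col M}))"

end

theory Submission
  imports Defs
begin

(*
  Call X sqrt-dominated by (P, Q) if P, Q \<ge> 0 and |X_ij| \<le> sqrt (P_ij Q_ij) entrywise. By the
  Cauchy-Schwarz inequality sum_k sqrt (a_k b_k) \<le> sqrt (sum_k a_k * sum_k b_k) this relation is
  preserved by matrix products, hence by powers, and by limits of partial sums, hence by the
  Neumann series (I - M)^-1 = sum_k M^k, which converges since \<rho>(B), \<rho>(C) < 1. The norm bounds
  follow by applying Cauchy-Schwarz once more to row and column sums. For the spectral radius, the
  entries of B^k and C^k are O(\<beta>^k) and O(\<gamma>^k) for any \<beta> > \<rho>(B), \<gamma> > \<rho>(C), so those of A^k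
  are O(sqrt (\<beta>\<gamma>)^k); testing A^k on an eigenvector of a dominant eigenvalue gives
  \<rho>(A) \<le> sqrt (\<beta>\<gamma>).
*)

lemma sqrt_mult_add_le:
  fixes a b c d :: real
  assumes "0 \<le> a" "0 \<le> b" "0 \<le> c" "0 \<le> d"
  shows "sqrt (a * b) + sqrt (c * d) \<le> sqrt ((a + c) * (b + d))"
proof -
  have "2 * sqrt (a * d) * sqrt (c * b) \<le> a * d + c * b"
    using sum_power2_ge_zero[of "sqrt (a * d) - sqrt (c * b)" 0] assms
    by (simp add: power2_eq_square algebra_simps real_sqrt_mult)
  then have "(sqrt (a * b) + sqrt (c * d))\<^sup>2 \<le> (a + c) * (b + d)"
    using assms by (simp add: power2_eq_square algebra_simps real_sqrt_mult)
  then show ?thesis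
    by (meson real_le_rsqrt)
qed

lemma sum_sqrt_mult_le:
  fixes a b :: "'i \<Rightarrow> real"
  assumes "\<And>k. k \<in> K \<Longrightarrow> 0 \<le> a k" "\<And>k. k \<in> K \<Longrightarrow> 0 \<le> b k"
  shows "(\<Sum>k\<in>K. sqrt (a k * b k)) \<le> sqrt (sum a K * sum b K)"
  using assms
proof (induction K rule: infinite_finite_induct)
  case (insert x F)
  have "(\<Sum>k\<in>insert x F. sqrt (a k * b k)) \<le> sqrt (a x * b x) + sqrt (sum a F * sum b F)"
    using insert by simp
  also have "\<dots> \<le> sqrt ((a x + sum a F) * (b x + sum b F))"
    using insert by (intro sqrt_mult_add_le) (auto intro: sum_nonneg)
  finally show ?case
    using insert by simp
qed simp_all

lemma index_mult_mat_sum: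
  assumes "A \<in> carrier_mat nr n" "B \<in> carrier_mat n nc" "i < nr" "j < nc"
  shows "(A * B) $$ (i, j) = (\<Sum>k<n. A $$ (i, k) * B $$ (k, j))"
  using assms by (auto simp: scalar_prod_def lessThan_atLeast0 intro!: sum.cong)

lemma index_mult_mat_vec_sum:
  assumes "A \<in> carrier_mat nr n" "v \<in> carrier_vec n" "i < nr"
  shows "(A *\<^sub>v v) $ i = (\<Sum>k<n. A $$ (i, k) * v $ k)"
  using assms by (auto simp: scalar_prod_def lessThan_atLeast0 intro!: sum.cong)

section \<open>Entrywise domination\<close>

definition sqrt_dominated :: "nat \<Rightarrow> 'a::real_normed_field mat \<Rightarrow> real mat \<Rightarrow> real mat \<Rightarrow> bool" where
  "sqrt_dominated n X P Q \<longleftrightarrow>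
     X \<in> carrier_mat n n \<and> P \<in> carrier_mat n n \<and> Q \<in> carrier_mat n n \<and>
     (\<forall>i<n. \<forall>j<n. 0 \<le> P $$ (i, j) \<and> 0 \<le> Q $$ (i, j) \<and>
        norm (X $$ (i, j)) \<le> sqrt (P $$ (i, j) * Q $$ (i, j)))"

lemma sqrt_dominated_carrier:
  assumes "sqrt_dominated n X P Q"
  shows "X \<in> carrier_mat n n" "P \<in> carrier_mat n n" "Q \<in> carrier_mat n n"
  using assms unfolding sqrt_dominated_def by blast+

lemma sqrt_dominatedD:
  assumes "sqrt_dominated n X P Q" "i < n" "j < n"
  shows "0 \<le> P $$ (i, j)" "0 \<le> Q $$ (i, j)" "norm (X $$ (i, j)) \<le> sqrt (P $$ (i, j) * Q $$ (i, j))"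
  using assms unfolding sqrt_dominated_def by blast+

lemma sqrt_dominated_one: "sqrt_dominated n (1\<^sub>m n) (1\<^sub>m n) (1\<^sub>m n)"
  unfolding sqrt_dominated_def by auto

lemma sqrt_dominated_mult:
  assumes X: "sqrt_dominated n X P Q" and Y: "sqrt_dominated n Y R S"
  shows "sqrt_dominated n (X * Y) (P * R) (Q * S)"
proof -
  note car = sqrt_dominated_carrier[OF X] sqrt_dominated_carrier[OF Y]
  have "0 \<le> (P * R) $$ (i, j) \<and> 0 \<le> (Q * S) $$ (i, j) \<and>
        norm ((X * Y) $$ (i, j)) \<le> sqrt ((P * R) $$ (i, j) * (Q * S) $$ (i, j))"
    if ij: "i < n" "j < n" for i j
  proof -
    note entry = index_mult_mat_sum[OF _ _ ij, of _ n]
    have PR: "0 \<le> P $$ (i, k) * R $$ (k, j)" and QS: "0 \<le> Q $$ (i, k) * S $$ (k, j)" if "k < n" for k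
      using sqrt_dominatedD[OF X] sqrt_dominatedD[OF Y] that ij by simp_all
    have "norm ((X * Y) $$ (i, j)) \<le> (\<Sum>k<n. norm (X $$ (i, k)) * norm (Y $$ (k, j)))"
      using car by (simp add: entry) (rule order_trans[OF norm_sum], simp add: norm_mult)
    also have "\<dots> \<le> (\<Sum>k<n. sqrt ((P $$ (i, k) * R $$ (k, j)) * (Q $$ (i, k) * S $$ (k, j))))"
    proof (rule sum_mono)
      fix k assume "k \<in> {..<n}"
      then have "norm (X $$ (i, k)) * norm (Y $$ (k, j))
          \<le> sqrt (P $$ (i, k) * Q $$ (i, k)) * sqrt (R $$ (k, j) * S $$ (k, j))"
        using sqrt_dominatedD[OF X] sqrt_dominatedD[OF Y] ij by (intro mult_mono) auto
      then show "norm (X $$ (i, k)) * norm (Y $$ (k, j))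
          \<le> sqrt ((P $$ (i, k) * R $$ (k, j)) * (Q $$ (i, k) * S $$ (k, j)))"
        by (simp add: real_sqrt_mult[symmetric] ac_simps)
    qed
    also have "\<dots> \<le> sqrt ((P * R) $$ (i, j) * (Q * S) $$ (i, j))"
      using car PR QS by (simp add: entry) (rule sum_sqrt_mult_le; simp)
    finally show ?thesis
      using car PR QS by (simp add: entry) (auto intro: sum_nonneg)
  qed
  then show ?thesis
    using car unfolding sqrt_dominated_def by auto
qed

lemma sqrt_dominated_mat_list_prod:
  assumes "length Xs = length Ps" "length Qs = length Ps"
    and "\<forall>l<length Ps. sqrt_dominated n (Xs ! l) (Ps ! l) (Qs ! l)"
  shows "sqrt_dominated n (mat_list_prod n Xs) (mat_list_prod n Ps) (mat_list_prod n Qs)"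
  using assms
proof (induction Ps arbitrary: Xs Qs)
  case Nil
  then show ?case
    by (simp add: mat_list_prod_def sqrt_dominated_one)
next
  case (Cons P Ps)
  then obtain X Xs' Q Qs' where Xs: "Xs = X # Xs'" and Qs: "Qs = Q # Qs'"
    by (metis length_Suc_conv)
  have "sqrt_dominated n X P Q"
    using Cons.prems(3) Xs Qs by fastforce
  moreover have "sqrt_dominated n (mat_list_prod n Xs') (mat_list_prod n Ps) (mat_list_prod n Qs')"
    using Cons.IH[of Xs' Qs'] Cons.prems Xs Qs by fastforce
  ultimately show ?case
    unfolding Xs Qs mat_list_prod_def by (simp add: sqrt_dominated_mult)
qed

lemma sqrt_dominated_pow:
  assumes "sqrt_dominated n X P Q"
  shows "sqrt_dominated n (X ^\<^sub>m k) (P ^\<^sub>m k) (Q ^\<^sub>m k)"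
proof (induction k)
  case 0
  have "dim_row X = n" "dim_row P = n" "dim_row Q = n"
    using sqrt_dominated_carrier[OF assms] by auto
  then show ?case
    by (simp add: sqrt_dominated_one)
next
  case (Suc k)
  then show ?case
    by (simp add: sqrt_dominated_mult assms)
qed

lemma sqrt_dominated_transpose:
  "sqrt_dominated n X P Q \<Longrightarrow> sqrt_dominated n (transpose_mat X) (transpose_mat P) (transpose_mat Q)"
  unfolding sqrt_dominated_def by auto

lemma sqrt_dominated_series:
  assumes dom: "\<And>k. sqrt_dominated n (X k) (P k) (Q k)"
    and car: "X' \<in> carrier_mat n n" "P' \<in> carrier_mat n n" "Q' \<in> carrier_mat n n"
    and X': "\<forall>i<n. \<forall>j<n. (\<lambda>m. \<Sum>k<m. X k $$ (i, j)) \<longlonglongrightarrow> X' $$ (i, j)"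
    and P': "\<forall>i<n. \<forall>j<n. (\<lambda>m. \<Sum>k<m. P k $$ (i, j)) \<longlonglongrightarrow> P' $$ (i, j)"
    and Q': "\<forall>i<n. \<forall>j<n. (\<lambda>m. \<Sum>k<m. Q k $$ (i, j)) \<longlonglongrightarrow> Q' $$ (i, j)"
  shows "sqrt_dominated n X' P' Q'"
proof -
  have "0 \<le> P' $$ (i, j) \<and> 0 \<le> Q' $$ (i, j) \<and> norm (X' $$ (i, j)) \<le> sqrt (P' $$ (i, j) * Q' $$ (i, j))"
    if ij: "i < n" "j < n" for i j
  proof -
    note entry = sqrt_dominatedD[OF dom ij]
    have partial: "norm (\<Sum>k<m. X k $$ (i, j)) \<le> sqrt ((\<Sum>k<m. P k $$ (i, j)) * (\<Sum>k<m. Q k $$ (i, j)))" for m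
    proof -
      have "norm (\<Sum>k<m. X k $$ (i, j)) \<le> (\<Sum>k<m. sqrt (P k $$ (i, j) * Q k $$ (i, j)))"
        using entry by (intro order_trans[OF norm_sum] sum_mono) auto
      also have "\<dots> \<le> sqrt ((\<Sum>k<m. P k $$ (i, j)) * (\<Sum>k<m. Q k $$ (i, j)))"
        using entry by (intro sum_sqrt_mult_le) auto
      finally show ?thesis .
    qed
    have "0 \<le> P' $$ (i, j)"
      by (rule LIMSEQ_le_const[OF P'[rule_format, OF ij]]) (use entry in \<open>auto intro: sum_nonneg\<close>)
    moreover have "0 \<le> Q' $$ (i, j)"
      by (rule LIMSEQ_le_const[OF Q'[rule_format, OF ij]]) (use entry in \<open>auto intro: sum_nonneg\<close>)
    moreover have "norm (X' $$ (i, j)) \<le> sqrt (P' $$ (i, j) * Q' $$ (i, j))"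
    proof (rule LIMSEQ_le)
      show "(\<lambda>m. norm (\<Sum>k<m. X k $$ (i, j))) \<longlonglongrightarrow> norm (X' $$ (i, j))"
        using X' ij by (intro tendsto_norm) auto
      show "(\<lambda>m. sqrt ((\<Sum>k<m. P k $$ (i, j)) * (\<Sum>k<m. Q k $$ (i, j))))
          \<longlonglongrightarrow> sqrt (P' $$ (i, j) * Q' $$ (i, j))"
        using P' Q' ij by (intro tendsto_intros) auto
    qed (use partial in auto)
    ultimately show ?thesis
      by blast
  qed
  then show ?thesis
    using car unfolding sqrt_dominated_def by blast
qed

section \<open>Row and column sum norms\<close>

lemma norm_inf_mat_nonneg: "0 \<le> norm_inf_mat M"
  unfolding norm_inf_mat_def by (rule Max_ge) auto

lemma row_sum_le_norm_inf_mat: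
  "i < dim_row M \<Longrightarrow> (\<Sum>j<dim_col M. norm (M $$ (i, j))) \<le> norm_inf_mat M"
  unfolding norm_inf_mat_def by (rule Max_ge) auto

lemma norm_inf_mat_le:
  "0 \<le> c \<Longrightarrow> (\<And>i. i < dim_row M \<Longrightarrow> (\<Sum>j<dim_col M. norm (M $$ (i, j))) \<le> c) \<Longrightarrow> norm_inf_mat M \<le> c"
  unfolding norm_inf_mat_def by auto

lemma norm_one_mat_eq_norm_inf_mat_transpose: "norm_one_mat M = norm_inf_mat (transpose_mat M)"
  unfolding norm_one_mat_def norm_inf_mat_def
  by (intro arg_cong[where f = Max] arg_cong[where f = "insert 0"] image_cong) auto

lemma norm_inf_mat_sqrt_dominated:
  assumes dom: "sqrt_dominated n X P Q"
  shows "norm_inf_mat X \<le> sqrt (norm_inf_mat P * norm_inf_mat Q)"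
proof (rule norm_inf_mat_le)
  note car = sqrt_dominated_carrier[OF dom]
  show "0 \<le> sqrt (norm_inf_mat P * norm_inf_mat Q)"
    by (simp add: norm_inf_mat_nonneg)
  fix i assume "i < dim_row X"
  then have i: "i < n"
    using car by simp
  have row_sum: "(\<Sum>j<n. M $$ (i, j)) \<le> norm_inf_mat M"
    if "M \<in> carrier_mat n n" "\<forall>j<n. 0 \<le> M $$ (i, j)" for M :: "real mat"
    using row_sum_le_norm_inf_mat[of i M] that i by simp
  have "(\<Sum>j<dim_col X. norm (X $$ (i, j))) \<le> (\<Sum>j<n. sqrt (P $$ (i, j) * Q $$ (i, j)))"
    using car sqrt_dominatedD(3)[OF dom i] by simp (rule sum_mono, simp)
  also have "\<dots> \<le> sqrt ((\<Sum>j<n. P $$ (i, j)) * (\<Sum>j<n. Q $$ (i, j)))"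
    using sqrt_dominatedD[OF dom i] by (intro sum_sqrt_mult_le) auto
  also have "\<dots> \<le> sqrt (norm_inf_mat P * norm_inf_mat Q)"
  proof -
    have "0 \<le> P $$ (i, j)" "0 \<le> Q $$ (i, j)" if "j < n" for j
      using sqrt_dominatedD[OF dom i that] by simp_all
    then show ?thesis
      using car by (intro real_sqrt_le_mono mult_mono row_sum sum_nonneg norm_inf_mat_nonneg) auto
  qed
  finally show "(\<Sum>j<dim_col X. norm (X $$ (i, j))) \<le> sqrt (norm_inf_mat P * norm_inf_mat Q)" .
qed

lemma norm_one_mat_sqrt_dominated:
  "sqrt_dominated n X P Q \<Longrightarrow> norm_one_mat X \<le> sqrt (norm_one_mat P * norm_one_mat Q)"
  unfolding norm_one_mat_eq_norm_inf_mat_transpose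
  by (rule norm_inf_mat_sqrt_dominated[OF sqrt_dominated_transpose])

section \<open>Spectral radius and growth of powers\<close>

lemma mult_mat_vec_smult_mat:
  fixes A :: "'a::comm_semiring_0 mat"
  assumes "A \<in> carrier_mat nr n" "v \<in> carrier_vec n"
  shows "(c \<cdot>\<^sub>m A) *\<^sub>v v = c \<cdot>\<^sub>v (A *\<^sub>v v)"
  using assms by (intro eq_vecI) auto

lemma eigenvector_smult_mat:
  assumes "A \<in> carrier_mat n n" "eigenvector A v \<mu>"
  shows "eigenvector (c \<cdot>\<^sub>m A) v (c * \<mu>)"
  using assms by (auto simp: eigenvector_def mult_mat_vec_smult_mat smult_smult_assoc)

lemma spectral_radius_nonneg:
  assumes "A \<in> carrier_mat n n" "0 < n"
  shows "0 \<le> spectral_radius A"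
  using spectral_radius_mem_max(1)[OF assms] by auto

lemma spectral_radius_smult_le:
  assumes A: "A \<in> carrier_mat n n" and n: "0 < n" and c: "c \<noteq> 0"
  shows "spectral_radius (c \<cdot>\<^sub>m A) \<le> cmod c * spectral_radius A"
proof -
  have cA: "c \<cdot>\<^sub>m A \<in> carrier_mat n n"
    using A by simp
  obtain \<nu> v where \<nu>: "spectral_radius (c \<cdot>\<^sub>m A) = cmod \<nu>" and v: "eigenvector (c \<cdot>\<^sub>m A) v \<nu>"
    using spectral_radius_mem_max(1)[OF cA n] unfolding spectrum_def eigenvalue_def by auto
  have "inverse c \<cdot>\<^sub>m (c \<cdot>\<^sub>m A) = A"
    using A c by (intro eq_matI) auto
  then have "eigenvector A v (inverse c * \<nu>)"
    using eigenvector_smult_mat[OF cA v, of "inverse c"] by simp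
  then have "cmod (inverse c * \<nu>) \<le> spectral_radius A"
    using A n by (intro spectral_radius_mem_max(2)) (auto simp: spectrum_def eigenvalue_def intro!: imageI)
  then have "cmod c * cmod (inverse c * \<nu>) \<le> cmod c * spectral_radius A"
    by (rule mult_left_mono) simp
  then show ?thesis
    using c \<nu> by (simp add: norm_mult[symmetric] mult.assoc[symmetric])
qed

lemma pow_smult_mat:
  fixes A :: "'a::comm_ring_1 mat"
  assumes "A \<in> carrier_mat n n"
  shows "(c \<cdot>\<^sub>m A) ^\<^sub>m k = c ^ k \<cdot>\<^sub>m A ^\<^sub>m k"
proof (induction k)
  case (Suc k)
  then show ?case
    using assms by (intro eq_matI) (auto simp: mult_smult_assoc_mat mult_smult_distrib)
qed (use assms in \<open>auto intro!: eq_matI\<close>)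

lemma pow_entries_bound_of_spectral_radius_less:
  fixes M :: "complex mat"
  assumes M: "M \<in> carrier_mat n n" and lt: "spectral_radius M < \<beta>"
  shows "\<exists>c. \<forall>k i j. i < n \<longrightarrow> j < n \<longrightarrow> cmod ((M ^\<^sub>m k) $$ (i, j)) \<le> c * \<beta> ^ k"
proof (cases "n = 0")
  case False
  then have \<beta>: "0 < \<beta>"
    using spectral_radius_nonneg[OF M] lt by simp
  define M' where "M' = inverse (complex_of_real \<beta>) \<cdot>\<^sub>m M"
  have M': "M' \<in> carrier_mat n n"
    using M by (simp add: M'_def)
  have "spectral_radius M' \<le> inverse \<beta> * spectral_radius M"
    using spectral_radius_smult_le[OF M, of "inverse (complex_of_real \<beta>)"] False \<beta>
    by (simp add: M'_def norm_inverse)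
  also have "\<dots> < 1"
    using lt \<beta> by (simp add: field_simps)
  finally obtain c where c: "\<And>k. norm_bound (M' ^\<^sub>m k) c"
    using spectral_radius_jnf_norm_bound_less_1_upper_triangular[OF M'] by auto
  have "cmod ((M ^\<^sub>m k) $$ (i, j)) \<le> c * \<beta> ^ k" if "i < n" "j < n" for k i j
  proof -
    have "(M ^\<^sub>m k) $$ (i, j) = complex_of_real \<beta> ^ k * (M' ^\<^sub>m k) $$ (i, j)"
      using that M \<beta> by (simp add: M'_def pow_smult_mat flip: power_mult_distrib)
    then have "cmod ((M ^\<^sub>m k) $$ (i, j)) = \<beta> ^ k * cmod ((M' ^\<^sub>m k) $$ (i, j))"
      using \<beta> by (simp add: norm_mult norm_power)
    also have "\<dots> \<le> \<beta> ^ k * c"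
      using c[of k] that M' \<beta> by (intro mult_left_mono) (auto simp: norm_bound_def)
    finally show ?thesis
      by (simp add: mult.commute)
  qed
  then show ?thesis
    by blast
qed simp

lemma pow_entries_bound_of_spectral_radius_less_real:
  fixes P :: "real mat"
  assumes P: "P \<in> carrier_mat n n" and lt: "spectral_radius (map_mat complex_of_real P) < \<beta>"
  shows "\<exists>c. \<forall>k i j. i < n \<longrightarrow> j < n \<longrightarrow> \<bar>(P ^\<^sub>m k) $$ (i, j)\<bar> \<le> c * \<beta> ^ k"
proof -
  obtain c where c: "\<forall>k i j. i < n \<longrightarrow> j < n \<longrightarrow>
      cmod ((map_mat complex_of_real P ^\<^sub>m k) $$ (i, j)) \<le> c * \<beta> ^ k"
    using pow_entries_bound_of_spectral_radius_less[OF _ lt] P by fastforce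
  have "map_mat complex_of_real P ^\<^sub>m k = map_mat complex_of_real (P ^\<^sub>m k)" for k
    by (rule of_real_hom.mat_hom_pow[OF P, symmetric])
  then show ?thesis
    using c P by (intro exI[of _ c]) auto
qed

lemma spectral_radius_le_of_pow_entries_bound:
  fixes M :: "complex mat"
  assumes M: "M \<in> carrier_mat n n" and n: "0 < n" and q: "0 < q"
    and bound: "\<forall>k i j. i < n \<longrightarrow> j < n \<longrightarrow> cmod ((M ^\<^sub>m k) $$ (i, j)) \<le> c * q ^ k"
  shows "spectral_radius M \<le> q"
proof (rule ccontr)
  assume "\<not> spectral_radius M \<le> q"
  obtain ev v where ev: "spectral_radius M = cmod ev" and v: "eigenvector M v ev"
    using spectral_radius_mem_max(1)[OF M n] unfolding spectrum_def eigenvalue_def by auto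
  have v_car: "v \<in> carrier_vec n" and "v \<noteq> 0\<^sub>v n"
    using v M unfolding eigenvector_def by auto
  then obtain i where i: "i < n" "v $ i \<noteq> 0"
    by (metis eq_vecI index_zero_vec carrier_vecD)
  define K where "K = c * (\<Sum>j<n. cmod (v $ j))"
  have "cmod ev ^ k * cmod (v $ i) \<le> K * q ^ k" for k
  proof -
    have "cmod ev ^ k * cmod (v $ i) = cmod ((M ^\<^sub>m k *\<^sub>v v) $ i)"
      using eigenvector_pow[OF M v] i v_car by (simp add: norm_mult norm_power)
    also have "(M ^\<^sub>m k *\<^sub>v v) $ i = (\<Sum>j<n. (M ^\<^sub>m k) $$ (i, j) * v $ j)"
      using M by (intro index_mult_mat_vec_sum[OF _ v_car i(1)]) simp
    also have "cmod \<dots> \<le> (\<Sum>j<n. cmod ((M ^\<^sub>m k) $$ (i, j)) * cmod (v $ j))"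
      by (rule order_trans[OF norm_sum]) (simp add: norm_mult)
    also have "\<dots> \<le> (\<Sum>j<n. c * q ^ k * cmod (v $ j))"
      using bound i by (intro sum_mono mult_right_mono) auto
    also have "\<dots> = K * q ^ k"
      by (simp add: K_def sum_distrib_left ac_simps)
    finally show ?thesis .
  qed
  then have "(cmod ev / q) ^ k \<le> K / cmod (v $ i)" for k
    using q i by (simp add: power_divide field_simps)
  moreover have "1 < cmod ev / q"
    using \<open>\<not> spectral_radius M \<le> q\<close> ev q by simp
  ultimately show False
    using real_arch_pow not_le by blast
qed

lemma spectral_radius_sqrt_dominated:
  assumes dom: "sqrt_dominated n A B C"
  shows "spectral_radius A \<le> sqrt (spectral_radius (map_mat complex_of_real B)
                                  * spectral_radius (map_mat complex_of_real C))"
    (is "_ \<le> sqrt (?\<rho>B * ?\<rho>C)")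
proof (cases "n = 0")
  case True
  \<comment> \<open>all three spectral radii are then the same unspecified value \<open>Max {}\<close>\<close>
  then have "A = map_mat complex_of_real B" "A = map_mat complex_of_real C"
    using sqrt_dominated_carrier[OF dom] by (auto intro!: eq_matI)
  then show ?thesis
    by (simp add: real_sqrt_mult_self)
next
  case False
  note car = sqrt_dominated_carrier[OF dom]
  have \<rho>_nonneg: "0 \<le> ?\<rho>B" "0 \<le> ?\<rho>C"
    using car False by (auto intro: spectral_radius_nonneg[of _ n])
  have "spectral_radius A \<le> sqrt ((?\<rho>B + \<epsilon>) * (?\<rho>C + \<epsilon>))" if \<epsilon>: "0 < \<epsilon>" for \<epsilon>
  proof -
    obtain cB where cB: "\<forall>k i j. i < n \<longrightarrow> j < n \<longrightarrow> \<bar>(B ^\<^sub>m k) $$ (i, j)\<bar> \<le> cB * (?\<rho>B + \<epsilon>) ^ k"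
      using pow_entries_bound_of_spectral_radius_less_real[OF car(2)] \<epsilon> by fastforce
    obtain cC where cC: "\<forall>k i j. i < n \<longrightarrow> j < n \<longrightarrow> \<bar>(C ^\<^sub>m k) $$ (i, j)\<bar> \<le> cC * (?\<rho>C + \<epsilon>) ^ k"
      using pow_entries_bound_of_spectral_radius_less_real[OF car(3)] \<epsilon> by fastforce
    have "cmod ((A ^\<^sub>m k) $$ (i, j)) \<le> sqrt (cB * cC) * sqrt ((?\<rho>B + \<epsilon>) * (?\<rho>C + \<epsilon>)) ^ k"
      if ij: "i < n" "j < n" for k i j
    proof -
      note entry = sqrt_dominatedD[OF sqrt_dominated_pow[OF dom] ij, of k]
      have "(B ^\<^sub>m k) $$ (i, j) \<le> cB * (?\<rho>B + \<epsilon>) ^ k" "0 \<le> cB * (?\<rho>B + \<epsilon>) ^ k"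
        "(C ^\<^sub>m k) $$ (i, j) \<le> cC * (?\<rho>C + \<epsilon>) ^ k"
        using cB[rule_format, OF ij, of k] cC[rule_format, OF ij, of k] by linarith+
      then have "(B ^\<^sub>m k) $$ (i, j) * (C ^\<^sub>m k) $$ (i, j) \<le> cB * (?\<rho>B + \<epsilon>) ^ k * (cC * (?\<rho>C + \<epsilon>) ^ k)"
        using entry by (intro mult_mono) auto
      then have "cmod ((A ^\<^sub>m k) $$ (i, j)) \<le> sqrt (cB * (?\<rho>B + \<epsilon>) ^ k * (cC * (?\<rho>C + \<epsilon>) ^ k))"
        using entry(3) real_sqrt_le_mono order_trans by blast
      then show ?thesis
        by (simp add: real_sqrt_mult real_sqrt_power power_mult_distrib ac_simps)
    qed
    then show ?thesis
      using False \<rho>_nonneg \<epsilon> by (intro spectral_radius_le_of_pow_entries_bound[OF car(1)]) auto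
  qed
  then have "\<forall>\<^sub>F \<epsilon> in at_right 0. spectral_radius A \<le> sqrt ((?\<rho>B + \<epsilon>) * (?\<rho>C + \<epsilon>))"
    by (rule eventually_mono[OF eventually_at_right_less])
  moreover have "((\<lambda>\<epsilon>. sqrt ((?\<rho>B + \<epsilon>) * (?\<rho>C + \<epsilon>))) \<longlongrightarrow> sqrt ((?\<rho>B + 0) * (?\<rho>C + 0))) (at_right 0)"
    by (intro tendsto_intros)
  ultimately show ?thesis
    by (intro tendsto_lowerbound[of _ _ "at_right 0"]) auto
qed

section \<open>Neumann series\<close>

lemma pow_mult_mat_vec_fixed:
  assumes M: "M \<in> carrier_mat n n" and v: "v \<in> carrier_vec n" and fixed: "M *\<^sub>v v = v"
  shows "M ^\<^sub>m k *\<^sub>v v = v"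
proof (induction k)
  case (Suc k)
  have "M ^\<^sub>m Suc k *\<^sub>v v = M ^\<^sub>m k *\<^sub>v (M *\<^sub>v v)"
    using M v by (simp add: assoc_mult_mat_vec[of _ n n _ n])
  then show ?case
    using fixed Suc by simp
qed (use M v in simp)

lemma det_one_minus_mat_neq_0:
  fixes M :: "'a::real_normed_field mat"
  assumes M: "M \<in> carrier_mat n n"
    and lim: "\<forall>i<n. \<forall>j<n. (\<lambda>k. (M ^\<^sub>m k) $$ (i, j)) \<longlonglongrightarrow> 0"
  shows "det (1\<^sub>m n - M) \<noteq> 0"
proof
  assume "det (1\<^sub>m n - M) = 0"
  then obtain v where v: "v \<in> carrier_vec n" "v \<noteq> 0\<^sub>v n" "(1\<^sub>m n - M) *\<^sub>v v = 0\<^sub>v n"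
    using det_0_iff_vec_prod_zero_field[OF minus_carrier_mat[OF M]] by blast
  have diff: "v - M *\<^sub>v v = 0\<^sub>v n"
    using v M by (simp add: minus_mult_distrib_mat_vec[OF one_carrier_mat M v(1)])
  have "M *\<^sub>v v = v"
  proof (rule eq_vecI)
    fix i assume "i < dim_vec v"
    then show "(M *\<^sub>v v) $ i = v $ i"
      using arg_cong[OF diff, of "\<lambda>w. w $ i"] v M by simp
  qed (use M v in simp)
  then have pow: "M ^\<^sub>m k *\<^sub>v v = v" for k
    using pow_mult_mat_vec_fixed[OF M v(1)] by blast
  have "v $ i = 0" if i: "i < n" for i
  proof -
    have "(\<lambda>k. \<Sum>j<n. (M ^\<^sub>m k) $$ (i, j) * v $ j) \<longlonglongrightarrow> (\<Sum>j<n. 0 * v $ j)"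
      using lim i by (intro tendsto_sum tendsto_mult tendsto_const) auto
    moreover have "(\<Sum>j<n. (M ^\<^sub>m k) $$ (i, j) * v $ j) = v $ i" for k
      using index_mult_mat_vec_sum[of "M ^\<^sub>m k" n n v i] pow[of k] M v(1) i by simp
    ultimately show ?thesis
      by (simp add: LIMSEQ_const_iff)
  qed
  then show False
    using v by (metis eq_vecI index_zero_vec carrier_vecD)
qed

lemma neumann_series:
  fixes M :: "'a::real_normed_field mat"
  assumes M: "M \<in> carrier_mat n n"
    and lim: "\<forall>i<n. \<forall>j<n. (\<lambda>k. (M ^\<^sub>m k) $$ (i, j)) \<longlonglongrightarrow> 0"
  obtains X where "mat_inverse (1\<^sub>m n - M) = Some X" "X \<in> carrier_mat n n"
    "\<forall>i<n. \<forall>j<n. (\<lambda>m. \<Sum>k<m. (M ^\<^sub>m k) $$ (i, j)) \<longlonglongrightarrow> X $$ (i, j)"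
proof -
  have I: "1\<^sub>m n - M \<in> carrier_mat n n"
    using minus_carrier_mat[OF M] .
  have "1\<^sub>m n - M \<in> Units (ring_mat TYPE('a) n n)"
    using det_non_zero_imp_unit[OF I det_one_minus_mat_neq_0[OF M lim]] .
  then obtain X where X_inv: "mat_inverse (1\<^sub>m n - M) = Some X"
    using mat_inverse(1)[OF I] by fastforce
  then have X: "X \<in> carrier_mat n n" and "(1\<^sub>m n - M) * X = 1\<^sub>m n"
    using mat_inverse(2)[OF I] by auto
  then have diff: "X - M * X = 1\<^sub>m n"
    using M by (simp add: minus_mult_distrib_mat[OF one_carrier_mat M X])
  have X_eq: "X = 1\<^sub>m n + M * X"
  proof (rule eq_matI)
    fix i j assume "i < dim_row (1\<^sub>m n + M * X)" "j < dim_col (1\<^sub>m n + M * X)"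
    then show "X $$ (i, j) = (1\<^sub>m n + M * X) $$ (i, j)"
      using arg_cong[OF diff, of "\<lambda>A. A $$ (i, j)"] M X by (auto simp: algebra_simps split: if_splits)
  qed (use M X in simp_all)
  have partial: "X $$ (i, j) = (\<Sum>k<m. (M ^\<^sub>m k) $$ (i, j)) + (M ^\<^sub>m m * X) $$ (i, j)"
    if ij: "i < n" "j < n" for i j m
  proof (induction m)
    case (Suc m)
    have Mm: "M ^\<^sub>m m \<in> carrier_mat n n"
      using M by simp
    have "M ^\<^sub>m m * X = M ^\<^sub>m m * (1\<^sub>m n + M * X)"
      using X_eq by simp
    also have "\<dots> = M ^\<^sub>m m + M ^\<^sub>m Suc m * X"
      using Mm M X by (simp add: mult_add_distrib_mat[OF Mm, of _ n] assoc_mult_mat[OF Mm M X])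
    finally have "(M ^\<^sub>m m * X) $$ (i, j) = (M ^\<^sub>m m) $$ (i, j) + (M ^\<^sub>m Suc m * X) $$ (i, j)"
      using ij M X by simp
    then show ?case
      using Suc by simp
  qed (use ij M X in simp)
  have "(\<lambda>m. \<Sum>k<m. (M ^\<^sub>m k) $$ (i, j)) \<longlonglongrightarrow> X $$ (i, j)" if ij: "i < n" "j < n" for i j
  proof -
    have "(\<lambda>m. \<Sum>l<n. (M ^\<^sub>m m) $$ (i, l) * X $$ (l, j)) \<longlonglongrightarrow> (\<Sum>l<n. 0 * X $$ (l, j))"
      using lim ij by (intro tendsto_sum tendsto_mult tendsto_const) auto
    moreover have "(M ^\<^sub>m m * X) $$ (i, j) = (\<Sum>l<n. (M ^\<^sub>m m) $$ (i, l) * X $$ (l, j))" for m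
      using M X ij by (intro index_mult_mat_sum) auto
    ultimately have "(\<lambda>m. (M ^\<^sub>m m * X) $$ (i, j)) \<longlonglongrightarrow> 0"
      by simp
    from tendsto_diff[OF tendsto_const[of "X $$ (i, j)"] this]
    have "(\<lambda>m. X $$ (i, j) - (M ^\<^sub>m m * X) $$ (i, j)) \<longlonglongrightarrow> X $$ (i, j)"
      by simp
    moreover have "X $$ (i, j) - (M ^\<^sub>m m * X) $$ (i, j) = (\<Sum>k<m. (M ^\<^sub>m k) $$ (i, j))" for m
      using partial[OF ij, of m] by simp
    ultimately show ?thesis
      by simp
  qed
  with X_inv X that show ?thesis
    by blast
qed

lemma pow_tendsto_zero_of_spectral_radius_less_1:
  fixes P :: "real mat"
  assumes P: "P \<in> carrier_mat n n" and lt: "spectral_radius (map_mat complex_of_real P) < 1"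
  shows "\<forall>i<n. \<forall>j<n. (\<lambda>k. (P ^\<^sub>m k) $$ (i, j)) \<longlonglongrightarrow> 0"
proof (cases "n = 0")
  case False
  define \<beta> where "\<beta> = (1 + spectral_radius (map_mat complex_of_real P)) / 2"
  have \<beta>: "0 < \<beta>" "\<beta> < 1" "spectral_radius (map_mat complex_of_real P) < \<beta>"
    using lt spectral_radius_nonneg[of "map_mat complex_of_real P" n] P False by (auto simp: \<beta>_def)
  then obtain c where c: "\<forall>k i j. i < n \<longrightarrow> j < n \<longrightarrow> \<bar>(P ^\<^sub>m k) $$ (i, j)\<bar> \<le> c * \<beta> ^ k"
    using pow_entries_bound_of_spectral_radius_less_real[OF P] by blast
  have lim: "(\<lambda>k. c * \<beta> ^ k) \<longlonglongrightarrow> 0"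
    using \<beta> by (intro tendsto_mult_right_zero LIMSEQ_power_zero) simp
  have "(\<lambda>k. (P ^\<^sub>m k) $$ (i, j)) \<longlonglongrightarrow> 0" if ij: "i < n" "j < n" for i j
  proof (rule tendsto_0_le[OF lim always_eventually, where K = 1], rule allI)
    fix k
    show "norm ((P ^\<^sub>m k) $$ (i, j)) \<le> norm (c * \<beta> ^ k) * 1"
      using c[rule_format, OF ij, of k] by simp
  qed
  then show ?thesis
    by blast
qed simp

lemma sqrt_dominated_inverse_one_minus:
  fixes A :: "'a::real_normed_field mat"
  assumes dom: "sqrt_dominated n A B C"
    and B: "spectral_radius (map_mat complex_of_real B) < 1"
    and C: "spectral_radius (map_mat complex_of_real C) < 1"
  shows "sqrt_dominated n (the (mat_inverse (1\<^sub>m n - A)))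
           (the (mat_inverse (1\<^sub>m n - B))) (the (mat_inverse (1\<^sub>m n - C)))"
proof -
  note car = sqrt_dominated_carrier[OF dom]
  note dom_pow = sqrt_dominated_pow[OF dom]
  have lim_B: "\<forall>i<n. \<forall>j<n. (\<lambda>k. (B ^\<^sub>m k) $$ (i, j)) \<longlonglongrightarrow> 0"
    by (rule pow_tendsto_zero_of_spectral_radius_less_1[OF car(2) B])
  have lim_C: "\<forall>i<n. \<forall>j<n. (\<lambda>k. (C ^\<^sub>m k) $$ (i, j)) \<longlonglongrightarrow> 0"
    by (rule pow_tendsto_zero_of_spectral_radius_less_1[OF car(3) C])
  have "(\<lambda>k. (A ^\<^sub>m k) $$ (i, j)) \<longlonglongrightarrow> 0" if ij: "i < n" "j < n" for i j
  proof -
    have "(\<lambda>k. sqrt ((B ^\<^sub>m k) $$ (i, j) * (C ^\<^sub>m k) $$ (i, j))) \<longlonglongrightarrow> sqrt (0 * 0)"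
      using lim_B lim_C ij by (intro tendsto_intros) auto
    then have lim: "(\<lambda>k. sqrt ((B ^\<^sub>m k) $$ (i, j) * (C ^\<^sub>m k) $$ (i, j))) \<longlonglongrightarrow> 0"
      by simp
    show ?thesis
    proof (rule tendsto_0_le[OF lim always_eventually, where K = 1], rule allI)
      fix k
      show "norm ((A ^\<^sub>m k) $$ (i, j)) \<le> norm (sqrt ((B ^\<^sub>m k) $$ (i, j) * (C ^\<^sub>m k) $$ (i, j))) * 1"
        using sqrt_dominatedD(3)[OF dom_pow ij, of k] by simp
    qed
  qed
  then obtain XA where "mat_inverse (1\<^sub>m n - A) = Some XA" "XA \<in> carrier_mat n n"
    "\<forall>i<n. \<forall>j<n. (\<lambda>m. \<Sum>k<m. (A ^\<^sub>m k) $$ (i, j)) \<longlonglongrightarrow> XA $$ (i, j)"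
    using neumann_series[OF car(1)] by blast
  moreover obtain XB where "mat_inverse (1\<^sub>m n - B) = Some XB" "XB \<in> carrier_mat n n"
    "\<forall>i<n. \<forall>j<n. (\<lambda>m. \<Sum>k<m. (B ^\<^sub>m k) $$ (i, j)) \<longlonglongrightarrow> XB $$ (i, j)"
    using neumann_series[OF car(2) lim_B] by blast
  moreover obtain XC where "mat_inverse (1\<^sub>m n - C) = Some XC" "XC \<in> carrier_mat n n"
    "\<forall>i<n. \<forall>j<n. (\<lambda>m. \<Sum>k<m. (C ^\<^sub>m k) $$ (i, j)) \<longlonglongrightarrow> XC $$ (i, j)"
    using neumann_series[OF car(3) lim_C] by blast
  ultimately show ?thesis
    using sqrt_dominated_series[OF dom_pow] by simp
qed

theorem lemma8:
  fixes n N :: nat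
    and As :: "complex mat list" and Bs Cs :: "real mat list"
  assumes lenA: "length As = N" and lenB: "length Bs = N" and lenC: "length Cs = N"
    and carA: "\<forall>l<N. As ! l \<in> carrier_mat n n"
    and carB: "\<forall>l<N. Bs ! l \<in> carrier_mat n n"
    and carC: "\<forall>l<N. Cs ! l \<in> carrier_mat n n"
    and nonnegB: "\<forall>l<N. \<forall>i<n. \<forall>j<n. 0 \<le> (Bs ! l) $$ (i, j)"
    and nonnegC: "\<forall>l<N. \<forall>i<n. \<forall>j<n. 0 \<le> (Cs ! l) $$ (i, j)"
    and dom: "\<forall>l<N. \<forall>i<n. \<forall>j<n.
               cmod ((As ! l) $$ (i, j)) \<le> sqrt ((Bs ! l) $$ (i, j) * (Cs ! l) $$ (i, j))"
  defines "A \<equiv> mat_list_prod n As"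
    and "B \<equiv> mat_list_prod n Bs"
    and "C \<equiv> mat_list_prod n Cs"
  shows "(\<forall>i<n. \<forall>j<n. cmod (A $$ (i, j)) \<le> sqrt (B $$ (i, j) * C $$ (i, j)))
    \<and> spectral_radius A \<le> sqrt (spectral_radius (map_mat complex_of_real B)
                                  * spectral_radius (map_mat complex_of_real C))
    \<and> (max (spectral_radius (map_mat complex_of_real B))
            (spectral_radius (map_mat complex_of_real C)) < 1 \<longrightarrow>
         norm_inf_mat (the (mat_inverse (1\<^sub>m n - A)))
           \<le> sqrt (norm_inf_mat (the (mat_inverse (1\<^sub>m n - B)))
                   * norm_inf_mat (the (mat_inverse (1\<^sub>m n - C))))
       \<and> norm_one_mat (the (mat_inverse (1\<^sub>m n - A)))
           \<le> sqrt (norm_one_mat (the (mat_inverse (1\<^sub>m n - B)))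
                   * norm_one_mat (the (mat_inverse (1\<^sub>m n - C)))))"
proof -
  have dominated: "sqrt_dominated n A B C"
    unfolding A_def B_def C_def
    by (rule sqrt_dominated_mat_list_prod) (use assms in \<open>auto simp: sqrt_dominated_def\<close>)
  have inverses: "sqrt_dominated n (the (mat_inverse (1\<^sub>m n - A)))
      (the (mat_inverse (1\<^sub>m n - B))) (the (mat_inverse (1\<^sub>m n - C)))"
    if "max (spectral_radius (map_mat complex_of_real B))
            (spectral_radius (map_mat complex_of_real C)) < 1"
    using that by (simp add: sqrt_dominated_inverse_one_minus[OF dominated])
  show ?thesis
    using sqrt_dominatedD(3)[OF dominated] spectral_radius_sqrt_dominated[OF dominated]
      norm_inf_mat_sqrt_dominated[OF inverses] norm_one_mat_sqrt_dominated[OF inverses]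
    by blast
qed

end
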